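(* Let $\mathcal V$ be a multivector field on $X$ and let $S\subset X$ be a locally closed, $\mathcal V$-compatible invariant set. Then $S$ is an isolated invariant set (indeed $\operatorname{cl}S$ isolates $S$).
   Context: $X$ is a finite $T_0$ topological space. For $A\subset X$, $\operatorname{cl}A$ is its closure and $\operatorname{mo}A:=\operatorname{cl}A\setminus A$. $A$ is locally closed if it is the intersection of an open and a closed subset of $X$. $H$ denotes relative singular homology. A multivector is a nonempty locally closed subset of $X$; a multivector field $\mathcal V$ on $X$ is a partition of $X$ into multivectors. For $x\in X$, $[x]$ denotes the element of $\mathcal V$ containing $x$. A multivector $V$ is critical if $H(\operatorname{cl}V,\operatorname{mo}V)\neq0$, regular otherwise. $A\subset X$ is $\mathcal V$-compatible if for every $x\in X$ either $[x]\cap A=\emptyset$ or $[x]\subset A$. Put $\Pi_{\mathcal V}(x):=[x]\cup\operatorname{cl}\{x\}$ and $\Pi_{\mathcal V}(A):=\bigcup_{x\in A}\Pi_{\mathcal V}(x)$. A $\mathbb Z$-interval is $\mathbb Z\cap I$ for a real interval $I$. A solution in $A\subset X$ is a map $\varphi:D\to A$ on a $\mathbb Z$-interval $D$ with $\varphi(i+1)\in\Pi_{\mathcal V}(\varphi(i))$ whenever $i,i+1\in D$; it is full if $D=\mathbb Z$, and a path if $D$ is bounded, its endpoints being $\varphi(\min D)$ and $\varphi(\max D)$. A full solution $\varphi$ is essential if for every $t\in\mathbb Z$ with $[\varphi(t)]$ regular, the set $\{s\in\mathbb Z:\varphi(s)\notin[\varphi(t)]\}$ is unbounded below and unbounded above.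 $\operatorname{Inv}A$ is the set of $x\in A$ such that there is an essential full solution $\varphi$ with image in $A$ and $\varphi(0)=x$; $A$ is invariant if $\operatorname{Inv}A=A$. A closed set $N$ isolates an invariant set $S\subset N$ if (a) every path in $N$ with both endpoints in $S$ has image contained in $S$, and (b) $\Pi_{\mathcal V}(S)\subset N$. An invariant set is an isolated invariant set if some closed set isolates it. *)

theory Defs
  imports "HOL-Homology.Homology"
begin

definition t0_top :: "'a topology \<Rightarrow> bool" where
  "t0_top X \<longleftrightarrow>
     (\<forall>x\<in>topspace X. \<forall>y\<in>topspace X. x \<noteq> y \<longrightarrow> (\<exists>U. openin X U \<and> (x \<notin> U \<longleftrightarrow> y \<in> U)))"

definition locally_closed_in :: "'a topology \<Rightarrow> 'a set \<Rightarrow> bool" where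
  "locally_closed_in X A \<longleftrightarrow> (\<exists>U C. openin X U \<and> closedin X C \<and> A = U \<inter> C)"

definition mouth :: "'a topology \<Rightarrow> 'a set \<Rightarrow> 'a set" where
  "mouth X A = X closure_of A - A"

definition multivector :: "'a topology \<Rightarrow> 'a set \<Rightarrow> bool" where
  "multivector X A \<longleftrightarrow> A \<noteq> {} \<and> A \<subseteq> topspace X \<and> locally_closed_in X A"

definition multivector_field :: "'a topology \<Rightarrow> 'a set set \<Rightarrow> bool" where
  "multivector_field X V \<longleftrightarrow>
     (\<forall>A\<in>V. multivector X A) \<and> \<Union>V = topspace X \<and>
     (\<forall>A\<in>V. \<forall>B\<in>V. A \<noteq> B \<longrightarrow> A \<inter> B = {})"

definition cell :: "'a set set \<Rightarrow> 'a \<Rightarrow> 'a set" where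
  "cell V x = (THE A. A \<in> V \<and> x \<in> A)"

definition critical :: "'a topology \<Rightarrow> 'a set \<Rightarrow> bool" where
  "critical X A \<longleftrightarrow>
     (\<exists>p. \<not> trivial_group
            (relative_homology_group p (subtopology X (X closure_of A)) (mouth X A)))"

definition regular :: "'a topology \<Rightarrow> 'a set \<Rightarrow> bool" where
  "regular X A \<longleftrightarrow> \<not> critical X A"

definition compatible :: "'a topology \<Rightarrow> 'a set set \<Rightarrow> 'a set \<Rightarrow> bool" where
  "compatible X V A \<longleftrightarrow> (\<forall>x\<in>topspace X. cell V x \<inter> A = {} \<or> cell V x \<subseteq> A)"

definition Pi_V :: "'a topology \<Rightarrow> 'a set set \<Rightarrow> 'a \<Rightarrow> 'a set" where
  "Pi_V X V x = cell V x \<union> X closure_of {x}"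

definition Pi_V_set :: "'a topology \<Rightarrow> 'a set set \<Rightarrow> 'a set \<Rightarrow> 'a set" where
  "Pi_V_set X V A = (\<Union>x\<in>A. Pi_V X V x)"

definition full_solution :: "'a topology \<Rightarrow> 'a set set \<Rightarrow> 'a set \<Rightarrow> (int \<Rightarrow> 'a) \<Rightarrow> bool" where
  "full_solution X V A \<phi> \<longleftrightarrow> (\<forall>i. \<phi> i \<in> A) \<and> (\<forall>i. \<phi> (i + 1) \<in> Pi_V X V (\<phi> i))"

definition essential :: "'a topology \<Rightarrow> 'a set set \<Rightarrow> (int \<Rightarrow> 'a) \<Rightarrow> bool" where
  "essential X V \<phi> \<longleftrightarrow>
     (\<forall>t. regular X (cell V (\<phi> t)) \<longrightarrow>
        (\<forall>n. \<exists>s\<le>n. \<phi> s \<notin> cell V (\<phi> t)) \<and> (\<forall>n. \<exists>s\<ge>n. \<phi> s \<notin> cell V (\<phi> t)))"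

definition Inv :: "'a topology \<Rightarrow> 'a set set \<Rightarrow> 'a set \<Rightarrow> 'a set" where
  "Inv X V A = {x \<in> A. \<exists>\<phi>. full_solution X V A \<phi> \<and> essential X V \<phi> \<and> \<phi> 0 = x}"

definition invariant :: "'a topology \<Rightarrow> 'a set set \<Rightarrow> 'a set \<Rightarrow> bool" where
  "invariant X V A \<longleftrightarrow> Inv X V A = A"

definition path_in :: "'a topology \<Rightarrow> 'a set set \<Rightarrow> 'a set \<Rightarrow> int \<Rightarrow> int \<Rightarrow> (int \<Rightarrow> 'a) \<Rightarrow> bool" where
  "path_in X V A a b \<phi> \<longleftrightarrow> a \<le> b \<and> (\<forall>i\<in>{a..b}. \<phi> i \<in> A) \<and>
     (\<forall>i. a \<le> i \<and> i < b \<longrightarrow> \<phi> (i + 1) \<in> Pi_V X V (\<phi> i))"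

definition isolates :: "'a topology \<Rightarrow> 'a set set \<Rightarrow> 'a set \<Rightarrow> 'a set \<Rightarrow> bool" where
  "isolates X V N S \<longleftrightarrow> closedin X N \<and> S \<subseteq> N \<and>
     (\<forall>a b \<phi>. path_in X V N a b \<phi> \<and> \<phi> a \<in> S \<and> \<phi> b \<in> S \<longrightarrow> \<phi> ` {a..b} \<subseteq> S) \<and>
     Pi_V_set X V S \<subseteq> N"

definition isolated_invariant_set :: "'a topology \<Rightarrow> 'a set set \<Rightarrow> 'a set \<Rightarrow> bool" where
  "isolated_invariant_set X V S \<longleftrightarrow> invariant X V S \<and> (\<exists>N. isolates X V N S)"

end

theory Submission
  imports Defs
begin

text \<open>Since \<open>S\<close> is locally closed, its mouth \<open>cl S - S\<close> is closed, and by compatibility the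
  multivector of a mouth point misses \<open>S\<close>; so a solution in \<open>cl S\<close> that has left \<open>S\<close> can never
  return, which is the isolation condition for paths. Compatibility also gives \<open>\<Pi>(S) \<subseteq> cl S\<close>.\<close>

lemma multivector_field_ex1_cell:
  assumes "multivector_field X V" "x \<in> topspace X"
  shows "\<exists>!A. A \<in> V \<and> x \<in> A"
proof -
  from assms obtain A where A: "A \<in> V" "x \<in> A"
    unfolding multivector_field_def by blast
  moreover have "B = A" if "B \<in> V" "x \<in> B" for B
    using that A assms(1) unfolding multivector_field_def by blast
  ultimately show ?thesis by blast
qed

lemma cell_in_multivector_field:
  assumes "multivector_field X V" "x \<in> topspace X"
  shows "cell V x \<in> V" and "x \<in> cell V x"
  using theI'[OF multivector_field_ex1_cell[OF assms]] unfolding cell_def by auto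

lemma locally_closed_in_open_inter_closure:
  assumes "locally_closed_in X S"
  obtains U where "openin X U" "S = U \<inter> X closure_of S"
proof -
  from assms obtain U C where UC: "openin X U" "closedin X C" "S = U \<inter> C"
    unfolding locally_closed_in_def by blast
  then have "S \<subseteq> topspace X" by (auto dest: openin_subset)
  moreover have "X closure_of S \<subseteq> C" using UC closure_of_minimal[of S C X] by auto
  ultimately have "S = U \<inter> X closure_of S" using UC closure_of_subset[of S X] by auto
  with UC(1) show thesis by (rule that)
qed

lemma closedin_mouth:
  assumes "locally_closed_in X S"
  shows "closedin X (mouth X S)"
proof -
  obtain U where "openin X U" "S = U \<inter> X closure_of S"
    using locally_closed_in_open_inter_closure[OF assms] .
  then have "mouth X S = X closure_of S - U" unfolding mouth_def by blast
  with \<open>openin X U\<close> show ?thesis by (simp add: closedin_diff)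
qed

lemma Pi_V_disjoint_from_mouth:
  assumes "multivector_field X V" "locally_closed_in X S" "compatible X V S"
    and "x \<in> mouth X S"
  shows "Pi_V X V x \<inter> S = {}"
proof -
  have x: "x \<in> topspace X" "x \<notin> S"
    using assms(4) closure_of_subset_topspace[of X S] unfolding mouth_def by auto
  then have "cell V x \<inter> S = {}"
    using assms(3) cell_in_multivector_field[OF assms(1)] unfolding compatible_def by blast
  moreover have "X closure_of {x} \<subseteq> mouth X S"
    using closure_of_minimal[OF _ closedin_mouth[OF assms(2)]] assms(4) by blast
  ultimately show ?thesis unfolding Pi_V_def mouth_def by blast
qed

lemma Pi_V_set_subset_closure:
  assumes "multivector_field X V" "S \<subseteq> topspace X" "compatible X V S"
  shows "Pi_V_set X V S \<subseteq> X closure_of S"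
proof
  fix y assume "y \<in> Pi_V_set X V S"
  then obtain x where x: "x \<in> S" "y \<in> Pi_V X V x" unfolding Pi_V_set_def by blast
  with assms have "cell V x \<subseteq> S"
    using cell_in_multivector_field[OF assms(1)] unfolding compatible_def by blast
  moreover have "X closure_of {x} \<subseteq> X closure_of S" using x(1) by (simp add: closure_of_mono)
  ultimately show "y \<in> X closure_of S"
    using x(2) closure_of_subset[OF assms(2)] unfolding Pi_V_def by blast
qed

lemma path_in_closure_never_returns:
  assumes "multivector_field X V" "locally_closed_in X S" "compatible X V S"
    and "path_in X V (X closure_of S) a b \<phi>" "a \<le> i" "i \<le> j" "j \<le> b" "\<phi> i \<notin> S"
  shows "\<phi> j \<notin> S"
  using \<open>i \<le> j\<close> \<open>j \<le> b\<close>
proof (induction j rule: int_ge_induct)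
  case base
  then show ?case using assms(8) by blast
next
  case (step j)
  have "\<phi> j \<in> mouth X S"
    using assms(4,5) step unfolding path_in_def mouth_def by auto
  moreover have "\<phi> (j + 1) \<in> Pi_V X V (\<phi> j)"
    using assms(4,5) step unfolding path_in_def by auto
  ultimately show ?case using Pi_V_disjoint_from_mouth[OF assms(1-3)] by blast
qed

theorem proposition4p12:
  fixes X :: "'a topology" and V :: "'a set set" and S :: "'a set"
  assumes "finite (topspace X)" and "t0_top X"
    and "multivector_field X V"
    and "S \<subseteq> topspace X"
    and "locally_closed_in X S"
    and "compatible X V S"
    and "invariant X V S"
  shows "isolated_invariant_set X V S \<and> isolates X V (X closure_of S) S"
proof -
  have "\<phi> ` {a..b} \<subseteq> S"
    if "path_in X V (X closure_of S) a b \<phi>" "\<phi> b \<in> S" for a b \<phi>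
    using path_in_closure_never_returns[OF assms(3,5,6) that(1)] that(2) by force
  then have "isolates X V (X closure_of S) S"
    unfolding isolates_def
    using Pi_V_set_subset_closure[OF assms(3,4,6)] closure_of_subset[OF assms(4)] by auto
  with assms(7) show ?thesis unfolding isolated_invariant_set_def by blast
qed

end
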